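(* For each $2p\in\{24, 28, 32, 36, 44, 48, 52, 54\}$ there exists a cyclic DCA$(4,2p+1;2p)$ satisfying P1 and P2.
   Context: A difference covering array DCA$(k,\eta;n)$ over $\mathbb{Z}_n$ (a cyclic DCA) is an $\eta\times k$ matrix $Q=[q(i,j)]$ with entries in $\mathbb{Z}_n$ such that for every pair of distinct columns $j,j'$ the multiset $\{q(i,j)-q(i,j') : 0\le i\le \eta-1\}$ contains every element of $\mathbb{Z}_n$ at least once. A DCA$(k,n+1;n)$ is taken in normalized form: all entries of its last row (row $n$) and last column (column $k-1$) equal $0$. It satisfies P1 if $0$ occurs at least twice in every column, and P2 if for all distinct columns $j,j'$ with $j\neq k-1\neq j'$, the set $\{q(i,j)-q(i,j') : 0\le i\le n-1\}$ equals $\mathbb{Z}_n\setminus\{0\}$. *)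

theory Defs
  imports Main
begin

text \<open>An eta x k matrix over Z_n is modelled as Q :: nat => nat => int, where Q i j is
the entry in row i (i < eta) and column j (j < k); entries are representatives in {0..<n}.\<close>

definition is_DCA :: "nat \<Rightarrow> nat \<Rightarrow> nat \<Rightarrow> (nat \<Rightarrow> nat \<Rightarrow> int) \<Rightarrow> bool" where
  "is_DCA k eta n Q \<longleftrightarrow>
     (\<forall>i<eta. \<forall>j<k. 0 \<le> Q i j \<and> Q i j < int n) \<and>
     (\<forall>j<k. \<forall>j'<k. j \<noteq> j' \<longrightarrow>
        (\<forall>d::int. 0 \<le> d \<and> d < int n \<longrightarrow> (\<exists>i<eta. (Q i j - Q i j') mod int n = d)))"

definition DCA_normalized :: "nat \<Rightarrow> nat \<Rightarrow> (nat \<Rightarrow> nat \<Rightarrow> int) \<Rightarrow> bool" where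
  "DCA_normalized k n Q \<longleftrightarrow>
     (\<forall>j<k. Q n j = 0) \<and> (\<forall>i<n+1. Q i (k - 1) = 0)"

definition DCA_P1 :: "nat \<Rightarrow> nat \<Rightarrow> (nat \<Rightarrow> nat \<Rightarrow> int) \<Rightarrow> bool" where
  "DCA_P1 k n Q \<longleftrightarrow> (\<forall>j<k. 2 \<le> card {i. i < n + 1 \<and> Q i j = 0})"

definition DCA_P2 :: "nat \<Rightarrow> nat \<Rightarrow> (nat \<Rightarrow> nat \<Rightarrow> int) \<Rightarrow> bool" where
  "DCA_P2 k n Q \<longleftrightarrow>
     (\<forall>j<k. \<forall>j'<k. j \<noteq> j' \<and> j \<noteq> k - 1 \<and> j' \<noteq> k - 1 \<longrightarrow>
        (\<lambda>i. (Q i j - Q i j') mod int n) ` {..<n} = {1..<int n})"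

end

theory Submission
  imports Defs
begin

text \<open>A DCA(k, n+1; n) with P1 and P2 is obtained from an n \<times> (k-1) array over \<open>\<int>\<^sub>n\<close>
whose columns are permutations of \<open>\<int>\<^sub>n\<close> and any two of whose columns have differences
exactly \<open>\<int>\<^sub>n \<setminus> {0}\<close>: border it by a zero row and a zero column. The zero row
supplies the difference 0 between any two columns, and the differences against the zero
column are a column itself or its negative, hence all of \<open>\<int>\<^sub>n\<close>. For the listed orders
such arrays are exhibited (the first column being the identity) and checked by evaluation.\<close>

definition zero_bordered :: "nat \<Rightarrow> nat \<Rightarrow> (nat \<Rightarrow> nat \<Rightarrow> int) \<Rightarrow> nat \<Rightarrow> nat \<Rightarrow> int" where
  "zero_bordered k n Q i j = (if i < n \<and> j < k - 1 then Q i j else 0)"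

lemma DCA_normalized_zero_bordered: "DCA_normalized k n (zero_bordered k n Q)"
  by (simp add: DCA_normalized_def zero_bordered_def)

context
  fixes k n :: nat and Q :: "nat \<Rightarrow> nat \<Rightarrow> int"
  assumes n_pos: "0 < n"
    and column_perm: "\<And>j. j < k - 1 \<Longrightarrow> (\<lambda>i. Q i j) ` {..<n} = {0..<int n}"
    and column_differences: "\<And>j j'. j < k - 1 \<Longrightarrow> j' < k - 1 \<Longrightarrow> j \<noteq> j' \<Longrightarrow>
          (\<lambda>i. (Q i j - Q i j') mod int n) ` {..<n} = {1..<int n}"
begin

lemma zero_bordered_column_hits:
  assumes "j < k - 1" "0 \<le> v" "v < int n"
  obtains i where "i < n" "zero_bordered k n Q i j = v"
proof -
  have "v \<in> (\<lambda>i. Q i j) ` {..<n}" using assms column_perm by simp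
  then obtain i where "i < n" "Q i j = v" by auto
  with assms(1) show thesis by (intro that[of i]) (simp_all add: zero_bordered_def)
qed

lemma zero_bordered_entry_range: "0 \<le> zero_bordered k n Q i j \<and> zero_bordered k n Q i j < int n"
proof (cases "i < n \<and> j < k - 1")
  case True
  then have "Q i j \<in> (\<lambda>i. Q i j) ` {..<n}" by simp
  with True have "Q i j \<in> {0..<int n}" using column_perm by simp
  with True show ?thesis by (simp add: zero_bordered_def)
qed (use n_pos in \<open>auto simp: zero_bordered_def\<close>)

lemma DCA_P1_zero_bordered: "DCA_P1 k n (zero_bordered k n Q)"
  unfolding DCA_P1_def
proof (intro allI impI)
  fix j assume "j < k"
  obtain i0 where i0: "i0 < n" "zero_bordered k n Q i0 j = 0"
  proof (cases "j < k - 1")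
    case True
    from n_pos have "0 < int n" by simp
    then show thesis by (rule zero_bordered_column_hits[OF True order_refl]) (rule that)
  next
    case False
    then show thesis using n_pos by (intro that[of 0]) (simp_all add: zero_bordered_def)
  qed
  then have "{i0, n} \<subseteq> {i. i < n + 1 \<and> zero_bordered k n Q i j = 0}"
    by (auto simp: zero_bordered_def)
  then have "card {i0, n} \<le> card {i. i < n + 1 \<and> zero_bordered k n Q i j = 0}"
    by (rule card_mono[rotated]) simp
  moreover have "card {i0, n} = 2" using i0 by simp
  ultimately show "2 \<le> card {i. i < n + 1 \<and> zero_bordered k n Q i j = 0}" by simp
qed

lemma zero_bordered_differences:
  assumes "j < k - 1" "j' < k - 1" "j \<noteq> j'"
  shows "(\<lambda>i. (zero_bordered k n Q i j - zero_bordered k n Q i j') mod int n) ` {..<n} = {1..<int n}"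
proof -
  have "(\<lambda>i. (zero_bordered k n Q i j - zero_bordered k n Q i j') mod int n) ` {..<n}
      = (\<lambda>i. (Q i j - Q i j') mod int n) ` {..<n}"
    using assms by (intro image_cong) (simp_all add: zero_bordered_def)
  with column_differences[OF assms] show ?thesis by simp
qed

lemma DCA_P2_zero_bordered: "DCA_P2 k n (zero_bordered k n Q)"
  unfolding DCA_P2_def
proof (intro allI impI)
  fix j j' assume "j < k" "j' < k" "j \<noteq> j' \<and> j \<noteq> k - 1 \<and> j' \<noteq> k - 1"
  then show "(\<lambda>i. (zero_bordered k n Q i j - zero_bordered k n Q i j') mod int n) ` {..<n} = {1..<int n}"
    by (intro zero_bordered_differences) auto
qed

lemma zero_bordered_covers_differences:
  assumes "j < k" "j' < k" "j \<noteq> j'" "0 \<le> d" "d < int n"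
  shows "\<exists>i<n + 1. (zero_bordered k n Q i j - zero_bordered k n Q i j') mod int n = d"
proof -
  let ?B = "zero_bordered k n Q"
  consider "d = 0" | "d \<noteq> 0" "j < k - 1" "j' < k - 1" | "j' = k - 1" "j < k - 1"
    | "j = k - 1" "j' < k - 1"
    using assms by linarith
  then show ?thesis
  proof cases
    case 1
    then show ?thesis by (intro exI[of _ n]) (simp add: zero_bordered_def)
  next
    case 2
    then have "d \<in> (\<lambda>i. (?B i j - ?B i j') mod int n) ` {..<n}"
      using assms zero_bordered_differences by simp
    then obtain i where "i < n" "(?B i j - ?B i j') mod int n = d" by auto
    then show ?thesis by (intro exI[of _ i]) simp
  next
    case 3
    obtain i where "i < n" "?B i j = d"
      using zero_bordered_column_hits 3 assms by metis
    with 3 assms show ?thesis by (intro exI[of _ i]) (simp add: zero_bordered_def)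
  next
    case 4
    obtain i where "i < n" "?B i j' = (- d) mod int n"
      using zero_bordered_column_hits[of j' "(- d) mod int n"] 4 n_pos by auto
    moreover have "(0 - (- d) mod int n) mod int n = d"
      using assms by (simp add: mod_minus_eq)
    ultimately show ?thesis using 4 by (intro exI[of _ i]) (simp add: zero_bordered_def)
  qed
qed

lemma is_DCA_zero_bordered: "is_DCA k (n + 1) n (zero_bordered k n Q)"
  unfolding is_DCA_def using zero_bordered_entry_range zero_bordered_covers_differences by blast

end

lemma uminus_mod_image: "(\<lambda>x. (- x) mod int n) ` {1..<int n} = {1..<int n}"
proof -
  have "(- x) mod int n = int n - x" if "x \<in> {1..<int n}" for x
    using that by (simp add: zmod_zminus1_eq_if)
  then have "(\<lambda>x. (- x) mod int n) ` {1..<int n} = (\<lambda>x. int n - x) ` {1..<int n}"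
    by (rule image_cong[OF refl])
  also have "\<dots> = {1..<int n}"
    by (auto simp: image_iff intro!: bexI[where x = "int n - _"])
  finally show ?thesis .
qed

lemma image_differences_mod_swap:
  assumes "(\<lambda>i. (a i - b i) mod int n) ` I = {1..<int n}"
  shows "(\<lambda>i. (b i - a i) mod int n) ` I = {1..<int n}"
proof -
  have "(\<lambda>i. (b i - a i) mod int n) = (\<lambda>x. (- x) mod int n) \<circ> (\<lambda>i. (a i - b i) mod int n)"
    by (auto simp: mod_minus_eq)
  then show ?thesis by (simp only: image_comp[symmetric] assms uminus_mod_image)
qed

definition columns_array :: "int list list \<Rightarrow> nat \<Rightarrow> nat \<Rightarrow> int" where
  "columns_array cols i j = cols ! j ! i"

text \<open>Since negation permutes \<open>\<int>\<^sub>n \<setminus> {0}\<close>, it suffices to check each unordered pair of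
columns once, which \<open>sorted_wrt\<close> does without indices.\<close>

definition difference_columns :: "nat \<Rightarrow> int list list \<Rightarrow> bool" where
  "difference_columns n cols \<longleftrightarrow>
     (\<forall>col \<in> set cols. length col = n \<and> set col = {0..<int n}) \<and>
     sorted_wrt (\<lambda>xs ys. set (map2 (\<lambda>x y. (x - y) mod int n) xs ys) = {1..<int n}) cols"

lemma DCA_of_difference_columns:
  assumes "difference_columns n cols" "0 < n" "k = length cols + 1"
  shows "\<exists>Q. is_DCA k (n + 1) n Q \<and> DCA_normalized k n Q \<and> DCA_P1 k n Q \<and> DCA_P2 k n Q"
proof -
  let ?D = "\<lambda>j j'. (\<lambda>i. (columns_array cols i j - columns_array cols i j') mod int n) ` {..<n}"
  have column: "cols ! j = map (\<lambda>i. columns_array cols i j) [0..<n]" if "j < length cols" for j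
    using assms(1) that map_nth[of "cols ! j"] by (simp add: difference_columns_def columns_array_def)
  have "(\<lambda>i. columns_array cols i j) ` {..<n} = {0..<int n}" if "j < length cols" for j
  proof -
    have "set (cols ! j) = {0..<int n}" using assms(1) that by (simp add: difference_columns_def)
    then show ?thesis by (subst (asm) column[OF that]) (simp add: atLeast0LessThan)
  qed
  moreover have ordered: "?D j j' = {1..<int n}" if "j < j'" "j' < length cols" for j j'
  proof -
    have "set (map2 (\<lambda>x y. (x - y) mod int n) (cols ! j) (cols ! j')) = {1..<int n}"
      using assms(1) that by (simp add: difference_columns_def sorted_wrt_iff_nth_less)
    then show ?thesis
      by (subst (asm) (1 2) column) (use that in \<open>simp_all add: map2_map_map atLeast0LessThan\<close>)
  qed
  moreover have "?D j j' = {1..<int n}"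
    if "j < length cols" "j' < length cols" "j \<noteq> j'" for j j'
  proof (cases "j < j'")
    case False
    with that have "j' < j" by simp
    from image_differences_mod_swap[OF ordered[OF this that(1)]] show ?thesis .
  qed (use that ordered in simp)
  ultimately show ?thesis
    using assms(2,3) is_DCA_zero_bordered DCA_normalized_zero_bordered DCA_P1_zero_bordered
      DCA_P2_zero_bordered
    by (intro exI[of _ "zero_bordered k n (columns_array cols)"]) simp
qed

definition difference_columns_table :: "(nat \<times> int list \<times> int list) list" where
  "difference_columns_table = [
   (24,
    [23, 16, 19, 7, 13, 1, 18, 15, 21, 10, 22, 8, 6, 5, 12, 17, 2, 20, 0, 14, 3, 11, 9, 4],
    [1, 20, 18, 0, 10, 17, 19, 22, 12, 23, 9, 13, 15, 11, 8, 3, 21, 4, 14, 2, 6, 5, 7, 16]),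
   (28,
    [13, 19, 24, 9, 16, 2, 25, 12, 6, 17, 21, 4, 22, 27, 3, 14, 18, 5, 10, 20, 15, 8, 1, 26, 0, 11, 7, 23],
    [14, 18, 22, 13, 10, 19, 11, 26, 9, 4, 23, 15, 0, 7, 16, 24, 6, 1, 5, 12, 27, 17, 20, 3, 21, 8, 25, 2]),
   (32,
    [2, 18, 16, 13, 20, 28, 27, 10, 5, 22, 26, 15, 30, 9, 6, 14, 25, 29, 11, 24, 3, 8, 12, 17, 0, 23, 21, 1, 7, 4, 31, 19],
    [29, 16, 8, 25, 28, 18, 1, 27, 2, 11, 31, 14, 17, 22, 21, 0, 26, 13, 4, 12, 7, 19, 6, 24, 23, 5, 30, 3, 10, 20, 9, 15]),
   (36,
    [13, 24, 27, 35, 1, 16, 20, 11, 26, 30, 29, 28, 21, 31, 8, 5, 15, 18, 4, 17, 22, 12, 10, 3, 19, 32, 0, 33, 7, 34, 14, 23, 25, 9, 6, 2],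
    [7, 20, 25, 24, 8, 1, 12, 6, 32, 29, 11, 2, 5, 22, 19, 18, 34, 27, 30, 35, 10, 16, 33, 15, 21, 4, 3, 13, 0, 31, 28, 9, 26, 14, 23, 17]),
   (44,
    [41, 32, 14, 39, 22, 34, 43, 28, 4, 15, 19, 21, 35, 17, 40, 9, 36, 18, 20, 7, 0, 38, 3, 26, 31, 30, 16, 10, 6, 1, 25, 42, 2, 24, 12, 33, 11, 23, 37, 8, 29, 5, 13, 27],
    [13, 30, 26, 42, 19, 16, 10, 37, 34, 36, 2, 14, 6, 1, 3, 29, 0, 40, 25, 24, 22, 8, 28, 32, 20, 43, 17, 5, 38, 41, 27, 21, 33, 9, 11, 7, 35, 15, 31, 12, 4, 39, 23, 18]),
   (48,
    [32, 14, 6, 45, 37, 35, 31, 2, 16, 18, 9, 38, 17, 11, 42, 30, 40, 36, 44, 39, 1, 27, 15, 12, 0, 28, 43, 34, 19, 26, 20, 4, 24, 47, 22, 5, 23, 33, 13, 41, 8, 3, 25, 29, 7, 46, 10, 21],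
    [24, 20, 41, 7, 26, 23, 13, 44, 40, 29, 22, 28, 14, 42, 47, 11, 8, 3, 45, 12, 35, 1, 10, 21, 32, 19, 9, 30, 38, 4, 27, 37, 0, 46, 39, 17, 2, 36, 15, 34, 16, 31, 43, 6, 5, 18, 33, 25]),
   (52,
    [9, 30, 49, 34, 24, 46, 38, 1, 5, 22, 37, 12, 23, 11, 51, 27, 20, 43, 33, 41, 25, 14, 10, 29, 16, 15, 4, 50, 45, 13, 48, 7, 28, 2, 44, 8, 39, 19, 0, 47, 42, 40, 6, 26, 35, 17, 32, 21, 3, 36, 31, 18],
    [10, 0, 23, 19, 17, 32, 21, 13, 48, 43, 18, 39, 26, 9, 1, 46, 45, 6, 22, 49, 12, 2, 16, 42, 27, 5, 51, 28, 50, 47, 14, 33, 44, 30, 41, 40, 7, 11, 29, 4, 38, 24, 37, 36, 34, 31, 3, 15, 20, 8, 35, 25]),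
   (54,
    [22, 21, 27, 8, 13, 4, 0, 51, 14, 46, 17, 47, 52, 5, 3, 43, 40, 30, 33, 15, 31, 37, 6, 50, 12, 44, 11, 35, 23, 20, 10, 29, 42, 45, 36, 2, 53, 1, 7, 32, 41, 16, 39, 19, 48, 18, 49, 26, 25, 9, 28, 38, 24, 34],
    [6, 37, 35, 14, 5, 13, 22, 38, 3, 49, 30, 26, 24, 4, 8, 19, 41, 10, 45, 43, 29, 1, 0, 28, 52, 48, 47, 2, 50, 31, 17, 20, 39, 18, 53, 27, 34, 21, 51, 42, 16, 40, 32, 15, 25, 33, 9, 11, 44, 46, 23, 7, 12, 36])
  ]"

lemma difference_columns_table_correct:
  "\<forall>(n, bs, cs) \<in> set difference_columns_table. difference_columns n [map int [0..<n], bs, cs]"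
  unfolding difference_columns_table_def by code_simp

lemma map_fst_difference_columns_table:
  "map fst difference_columns_table = [24, 28, 32, 36, 44, 48, 52, 54]"
  by (simp add: difference_columns_table_def)

theorem mainTheorem16:
  shows "\<forall>n \<in> {24, 28, 32, 36, 44, 48, 52, 54::nat}.
           \<exists>Q. is_DCA 4 (n + 1) n Q \<and> DCA_normalized 4 n Q \<and> DCA_P1 4 n Q \<and> DCA_P2 4 n Q"
proof
  fix n :: nat assume n: "n \<in> {24, 28, 32, 36, 44, 48, 52, 54}"
  then have "n \<in> set (map fst difference_columns_table)"
    by (simp add: map_fst_difference_columns_table)
  then obtain bs cs where "(n, bs, cs) \<in> set difference_columns_table" by auto
  then have "difference_columns n [map int [0..<n], bs, cs]"
    using difference_columns_table_correct by blast
  moreover have "0 < n" using n by auto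
  ultimately show "\<exists>Q. is_DCA 4 (n + 1) n Q \<and> DCA_normalized 4 n Q \<and> DCA_P1 4 n Q \<and> DCA_P2 4 n Q"
    by (rule DCA_of_difference_columns) simp
qed

end
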